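(* Let $N\ge1$, $\mathbf{h}_s,\mathbf{h}_0\in\mathbb{C}^N$, $\sigma>0$, $\epsilon>0$, $\bar P>0$, $P_t>0$, and let $\mathcal{B}=\{\mathbf{h}\in\mathbb{C}^N:\|\mathbf{h}-\mathbf{h}_0\|^2\le\epsilon\sigma^2\}$. Consider the mean feedback problem $$\mathbf{P3}:\ \max_{p\ge0,\ \|\mathbf{v}\|=1}\log\big(1+p\,\mathbf{h}_s^H\mathbf{v}\mathbf{v}^H\mathbf{h}_s\big)\ \text{ s.t. } p\le\bar P,\ \ p\,\mathbf{h}^H\mathbf{v}\mathbf{v}^H\mathbf{h}\le P_t\ \forall\mathbf{h}\in\mathcal{B},$$ and its two subproblems $\mathbf{SP1}$ (same objective, only the constraint $p\le\bar P$) and $\mathbf{SP2}$ (same objective, only the constraints $p\,\mathbf{h}^H\mathbf{v}\mathbf{v}^H\mathbf{h}\le P_t$ for all $\mathbf{h}\in\mathcal{B}$). Identify a feasible pair $(p,\mathbf{v})$ with $\mathbf{S}=p\mathbf{v}\mathbf{v}^H$. Let $\mathbf{S}_1$ be the optimal solution of $\mathbf{SP1}$ and $\mathbf{S}_2$ the optimal solution of $\mathbf{SP2}$. Then: (i) if $\mathbf{S}_1$ satisfies the constraint of $\mathbf{SP2}$, then $\mathbf{S}_1$ is the optimal solution of $\mathbf{P3}$; (ii) if $\mathbf{S}_2$ satisfies the constraint of $\mathbf{SP1}$, i.e. $\mathrm{tr}(\mathbf{S}_2)\le\bar P$, then $\mathbf{S}_2$ is the optimal solution of $\mathbf{P3}$;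 (iii) otherwise, the optimal solution $\mathbf{S}$ of $\mathbf{P3}$ satisfies both $\mathrm{tr}(\mathbf{S})=\bar P$ and $\mathbf{h}_{\mathrm{opt}}^H\mathbf{S}\mathbf{h}_{\mathrm{opt}}=P_t$, where $\mathbf{h}_{\mathrm{opt}}=\arg\max_{\mathbf{h}\in\mathcal{B}}\mathbf{h}^H\mathbf{S}\mathbf{h}$.
   Context: $\mathbf{P3}$ is the special case of the robust cognitive beamforming problem in which the channel-uncertainty covariance is $\sigma^2\mathbf{I}$ (mean feedback), so the uncertainty set is a Euclidean ball of radius $\sqrt{\epsilon}\sigma$ around $\mathbf{h}_0$. *)

theory Defs
  imports "HOL-Analysis.Analysis"
begin

text \<open>Vectors in C^N are modelled as complex ^ 'n (N = CARD('n) >= 1);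
  matrices as complex ^ 'n ^ 'n.\<close>

definition outer :: "real \<Rightarrow> complex ^ 'n \<Rightarrow> complex ^ 'n ^ 'n" where
  "outer p v = (\<chi> i j. complex_of_real p * v $ i * cnj (v $ j))"

text \<open>Hermitian form h^H S h (real part; it is real for Hermitian S).\<close>
definition hform :: "complex ^ 'n ^ 'n \<Rightarrow> complex ^ 'n \<Rightarrow> real" where
  "hform S h = Re (\<Sum>i\<in>UNIV. \<Sum>j\<in>UNIV. cnj (h $ i) * S $ i $ j * h $ j)"

definition mtrace :: "complex ^ 'n ^ 'n \<Rightarrow> real" where
  "mtrace S = Re (\<Sum>i\<in>UNIV. S $ i $ i)"

definition unc_ball :: "complex ^ 'n \<Rightarrow> real \<Rightarrow> real \<Rightarrow> (complex ^ 'n) set" where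
  "unc_ball h0 eps sg = {h. (norm (h - h0))\<^sup>2 \<le> eps * sg\<^sup>2}"

definition beam :: "complex ^ 'n ^ 'n \<Rightarrow> bool" where
  "beam S \<longleftrightarrow> (\<exists>p v. p \<ge> 0 \<and> norm v = 1 \<and> S = outer p v)"

definition rate :: "complex ^ 'n \<Rightarrow> complex ^ 'n ^ 'n \<Rightarrow> real" where
  "rate hs S = ln (1 + hform S hs)"

definition power_con :: "real \<Rightarrow> complex ^ 'n ^ 'n \<Rightarrow> bool" where
  "power_con Pbar S \<longleftrightarrow> mtrace S \<le> Pbar"

definition interf_con :: "complex ^ 'n \<Rightarrow> real \<Rightarrow> real \<Rightarrow> real \<Rightarrow> complex ^ 'n ^ 'n \<Rightarrow> bool" where
  "interf_con h0 eps sg Pt S \<longleftrightarrow> (\<forall>h\<in>unc_ball h0 eps sg. hform S h \<le> Pt)"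

definition feas_SP1 where "feas_SP1 Pbar S \<longleftrightarrow> beam S \<and> power_con Pbar S"
definition feas_SP2 where "feas_SP2 h0 eps sg Pt S \<longleftrightarrow> beam S \<and> interf_con h0 eps sg Pt S"
definition feas_P3 where
  "feas_P3 h0 eps sg Pbar Pt S \<longleftrightarrow> beam S \<and> power_con Pbar S \<and> interf_con h0 eps sg Pt S"

definition is_opt :: "('a \<Rightarrow> bool) \<Rightarrow> ('a \<Rightarrow> real) \<Rightarrow> 'a \<Rightarrow> bool" where
  "is_opt F f S \<longleftrightarrow> F S \<and> (\<forall>S'. F S' \<longrightarrow> f S' \<le> f S)"

end

theory Submission
  imports Defs
begin

text \<open>Every admissible S is a dyad w w^H (take w = sqrt p v), so the problem is one over vectors w:
  the rate is increasing in the gain |hs^H w|, and both constraints bound seminorms of w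
  (the norm, and |h^H w| for h in the ball). If w is optimal for P3 and some w' beats it on a
  subproblem, then, after rotating w' by a phase aligning hs^H w' with hs^H w, the combination
  (1 - t) w + t w' has strictly larger gain for every t \<in> (0,1], and each seminorm of it is at most
  the corresponding convex combination. The constraint shared by both problems is therefore kept,
  and a slack constraint of P3 survives for t small enough (using boundedness of the ball for the
  interference constraint). So an optimum of P3 with a slack power (interference) constraint is an
  optimum of SP2 (SP1); parts (i) and (ii) are immediate.\<close>

lemma mult_cnj_self: "z * cnj z = of_real ((cmod z)\<^sup>2)"
  by (metis complex_norm_square of_real_power)

definition cinner :: "complex ^ 'n \<Rightarrow> complex ^ 'n \<Rightarrow> complex" where
  "cinner h w = (\<Sum>i\<in>UNIV. cnj (h $ i) * w $ i)"

definition cscale :: "complex \<Rightarrow> complex ^ 'n \<Rightarrow> complex ^ 'n" where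
  "cscale c w = (\<chi> i. c * w $ i)"

lemma cinner_add_right: "cinner h (x + y) = cinner h x + cinner h y"
  by (simp add: cinner_def distrib_left sum.distrib)

lemma cinner_cscale_right: "cinner h (cscale c w) = c * cinner h w"
  by (simp add: cinner_def cscale_def sum_distrib_left mult_ac)

lemma norm_cscale: "norm (cscale c w) = cmod c * norm w"
  by (simp add: norm_vec_def L2_set_def cscale_def norm_mult power_mult_distrib
      sum_distrib_left[symmetric] real_sqrt_mult)

lemma continuous_on_cinner_left: "continuous_on A (\<lambda>h. cinner h w)"
  unfolding cinner_def by (intro continuous_intros)

lemma outer_scaleR: "outer p (a *\<^sub>R v) = outer (a\<^sup>2 * p) v"
  unfolding outer_def vec_eq_iff by (simp only: vec_lambda_beta vector_scaleR_component)
    (simp add: scaleR_conv_of_real power2_eq_square mult_ac)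

lemma hform_outer: "hform (outer p v) h = p * (cmod (cinner h v))\<^sup>2"
proof -
  have "(\<Sum>i\<in>UNIV. \<Sum>j\<in>UNIV. cnj (h $ i) * outer p v $ i $ j * h $ j)
      = of_real p * (cinner h v * cnj (cinner h v))"
    by (simp add: outer_def cinner_def sum_distrib_left sum_distrib_right mult_ac)
  then show ?thesis
    by (simp add: hform_def mult_cnj_self)
qed

lemma mtrace_outer: "mtrace (outer p v) = p * (norm v)\<^sup>2"
proof -
  have "(\<Sum>i\<in>UNIV. outer p v $ i $ i) = of_real (p * (\<Sum>i\<in>UNIV. (cmod (v $ i))\<^sup>2))"
    by (simp add: outer_def sum_distrib_left mult_ac mult_cnj_self)
  then show ?thesis
    by (simp add: mtrace_def norm_vec_def L2_set_def sum_nonneg)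
qed

lemma norm_axis_1: "norm (axis i (1::complex)) = 1"
  by (simp add: norm_vec_def L2_set_def axis_def if_distrib[of "\<lambda>x. (cmod x)\<^sup>2"] cong: if_cong)

lemma beam_iff_outer_1: "beam S \<longleftrightarrow> (\<exists>w. S = outer 1 w)"
proof
  assume "beam S"
  then obtain p v where "p \<ge> 0" "S = outer p v"
    unfolding beam_def by blast
  then have "S = outer 1 (sqrt p *\<^sub>R v)"
    by (simp add: outer_scaleR)
  then show "\<exists>w. S = outer 1 w" ..
next
  assume "\<exists>w. S = outer 1 w"
  then obtain w where S: "S = outer 1 w" ..
  show "beam S"
  proof (cases "w = 0")
    case True
    then have "S = outer 0 (axis undefined 1)"
      using outer_scaleR[of 1 0 "axis undefined 1"] by (simp add: S)
    then show ?thesis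
      unfolding beam_def using norm_axis_1 by blast
  next
    case False
    then have "S = outer ((norm w)\<^sup>2) ((1 / norm w) *\<^sub>R w)"
      by (simp add: S outer_scaleR power_divide)
    moreover have "norm ((1 / norm w) *\<^sub>R w) = 1"
      using False by simp
    ultimately show ?thesis
      unfolding beam_def by (metis zero_le_power2)
  qed
qed

lemma sq_le_iff_le_sqrt: "0 \<le> x \<Longrightarrow> x\<^sup>2 \<le> y \<longleftrightarrow> x \<le> sqrt y"
  using real_le_rsqrt real_sqrt_le_iff by fastforce

lemma power_con_outer_1: "power_con Pbar (outer 1 w) \<longleftrightarrow> norm w \<le> sqrt Pbar"
  by (simp add: power_con_def mtrace_outer sq_le_iff_le_sqrt)

lemma interf_con_outer_1:
  "interf_con h0 eps sg Pt (outer 1 w) \<longleftrightarrow> (\<forall>h\<in>unc_ball h0 eps sg. cmod (cinner h w) \<le> sqrt Pt)"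
  by (simp add: interf_con_def hform_outer sq_le_iff_le_sqrt)

lemma feas_P3_outer_1:
  "feas_P3 h0 eps sg Pbar Pt (outer 1 w) \<longleftrightarrow>
     norm w \<le> sqrt Pbar \<and> (\<forall>h\<in>unc_ball h0 eps sg. cmod (cinner h w) \<le> sqrt Pt)"
  by (auto simp: feas_P3_def beam_iff_outer_1 power_con_outer_1 interf_con_outer_1)

lemma rate_outer_1_less_iff:
  "rate hs (outer 1 w) < rate hs (outer 1 w') \<longleftrightarrow> cmod (cinner hs w) < cmod (cinner hs w')"
  by (simp add: rate_def hform_outer add_pos_nonneg)
     (meson norm_ge_zero power2_less_imp_less power_strict_mono pos2)

lemma unc_ball_subset_cball: "unc_ball h0 eps sg \<subseteq> cball h0 (sqrt (eps * sg\<^sup>2))"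
  by (auto simp: unc_ball_def dist_norm norm_minus_commute sq_le_iff_le_sqrt)

lemma cinner_bounded_on_unc_ball: "\<exists>K. \<forall>h\<in>unc_ball h0 eps sg. cmod (cinner h w) \<le> K"
proof -
  have "bounded ((\<lambda>h. cinner h w) ` cball h0 (sqrt (eps * sg\<^sup>2)))"
    by (intro compact_imp_bounded compact_continuous_image continuous_on_cinner_left compact_cball)
  then show ?thesis
    using unc_ball_subset_cball unfolding bounded_iff by blast
qed

lemma exists_unimodular_aligning:
  fixes a b :: complex and t :: real
  assumes "0 \<le> t" "t \<le> 1"
  shows "\<exists>c. cmod c = 1 \<and> cmod (of_real (1 - t) * a + of_real t * (c * b)) = (1 - t) * cmod a + t * cmod b"
proof (intro exI conjI)
  have "cis (Arg a - Arg b) * b = rcis (cmod b) (Arg a)"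
    by (metis rcis_cmod_Arg cis_rcis_eq rcis_mult mult_1_left diff_add_cancel)
  then have "of_real (1 - t) * a + of_real t * (cis (Arg a - Arg b) * b)
      = rcis ((1 - t) * cmod a + t * cmod b) (Arg a)"
    by (subst rcis_cmod_Arg[symmetric, of a]) (simp add: rcis_def algebra_simps)
  then show "cmod (of_real (1 - t) * a + of_real t * (cis (Arg a - Arg b) * b)) = (1 - t) * cmod a + t * cmod b"
    using assms by simp
qed (rule norm_cis)

lemma improving_combination:
  fixes w w' hs :: "complex ^ 'n" and t :: real
  assumes "0 < t" "t \<le> 1" "cmod (cinner hs w) < cmod (cinner hs w')"
  shows "\<exists>u. cmod (cinner hs w) < cmod (cinner hs u) \<and> norm u \<le> (1 - t) * norm w + t * norm w'
     \<and> (\<forall>h. cmod (cinner h u) \<le> (1 - t) * cmod (cinner h w) + t * cmod (cinner h w'))"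
proof -
  obtain c where c: "cmod c = 1"
    "cmod (of_real (1 - t) * cinner hs w + of_real t * (c * cinner hs w'))
       = (1 - t) * cmod (cinner hs w) + t * cmod (cinner hs w')"
    using exists_unimodular_aligning[OF less_imp_le[OF assms(1)] assms(2)] by blast
  define u where "u = cscale (of_real (1 - t)) w + cscale (of_real t * c) w'"
  have cinner_u: "cinner h u = of_real (1 - t) * cinner h w + of_real t * (c * cinner h w')" for h
    by (simp add: u_def cinner_add_right cinner_cscale_right)
  have "cmod (cinner hs w) < (1 - t) * cmod (cinner hs w) + t * cmod (cinner hs w')"
    using assms by (simp add: algebra_simps)
  also have "\<dots> = cmod (cinner hs u)"
    using c by (simp add: cinner_u)
  finally have "cmod (cinner hs w) < cmod (cinner hs u)" .
  moreover have "norm u \<le> (1 - t) * norm w + t * norm w'"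
    using norm_triangle_ineq[of "cscale (of_real (1 - t)) w" "cscale (of_real t * c) w'"] assms c
    by (simp add: u_def norm_cscale norm_mult del: of_real_diff)
  moreover have "cmod (cinner h u) \<le> (1 - t) * cmod (cinner h w) + t * cmod (cinner h w')" for h
    using norm_triangle_ineq[of "of_real (1 - t) * cinner h w" "of_real t * (c * cinner h w')"] assms c
    by (simp add: cinner_u norm_mult del: of_real_diff)
  ultimately show ?thesis by blast
qed

lemma exists_small_step:
  fixes a b c :: real
  assumes "a < b"
  shows "\<exists>t. 0 < t \<and> t \<le> 1 \<and> (1 - t) * a + t * c \<le> b"
proof -
  define t where "t = min 1 ((b - a) / (\<bar>c - a\<bar> + 1))"
  have "t \<le> (b - a) / (\<bar>c - a\<bar> + 1)"
    by (simp add: t_def)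
  then have "t * (\<bar>c - a\<bar> + 1) \<le> b - a"
    by (simp add: pos_le_divide_eq)
  moreover have "t * (c - a) \<le> t * (\<bar>c - a\<bar> + 1)"
    using assms by (intro mult_left_mono) (auto simp: t_def)
  moreover have "0 < t"
    using assms by (simp add: t_def)
  ultimately show ?thesis
    by (intro exI[of _ t]) (auto simp: t_def algebra_simps)
qed

lemma gain_le_of_is_opt_P3:
  assumes "is_opt (feas_P3 h0 eps sg Pbar Pt) (rate hs) (outer 1 w)"
    and "norm u \<le> sqrt Pbar" "\<forall>h\<in>unc_ball h0 eps sg. cmod (cinner h u) \<le> sqrt Pt"
  shows "cmod (cinner hs u) \<le> cmod (cinner hs w)"
proof -
  have "feas_P3 h0 eps sg Pbar Pt (outer 1 u)"
    using assms(2,3) by (simp add: feas_P3_outer_1)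
  then have "rate hs (outer 1 u) \<le> rate hs (outer 1 w)"
    using assms(1) by (simp add: is_opt_def)
  then show ?thesis
    by (simp add: not_less[symmetric] rate_outer_1_less_iff)
qed

lemma is_opt_SP2_if_power_slack:
  assumes opt: "is_opt (feas_P3 h0 eps sg Pbar Pt) (rate hs) S" and slack: "mtrace S < Pbar"
  shows "is_opt (feas_SP2 h0 eps sg Pt) (rate hs) S"
proof -
  obtain w where S: "S = outer 1 w"
    using opt by (auto simp: is_opt_def feas_P3_def beam_iff_outer_1)
  have interf_w: "\<forall>h\<in>unc_ball h0 eps sg. cmod (cinner h w) \<le> sqrt Pt"
    using opt by (simp add: S is_opt_def feas_P3_outer_1)
  have power_w: "norm w < sqrt Pbar"
    using slack by (simp add: S mtrace_outer real_less_rsqrt)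
  have "rate hs (outer 1 w') \<le> rate hs S" if "feas_SP2 h0 eps sg Pt (outer 1 w')" for w'
  proof (rule ccontr)
    assume "\<not> ?thesis"
    then have better: "cmod (cinner hs w) < cmod (cinner hs w')"
      by (simp add: S not_le rate_outer_1_less_iff)
    have interf_w': "\<forall>h\<in>unc_ball h0 eps sg. cmod (cinner h w') \<le> sqrt Pt"
      using that by (simp add: feas_SP2_def interf_con_outer_1)
    obtain t where t: "0 < t" "t \<le> 1" "(1 - t) * norm w + t * norm w' \<le> sqrt Pbar"
      using exists_small_step[OF power_w] by blast
    obtain u where u: "cmod (cinner hs w) < cmod (cinner hs u)" "norm u \<le> (1 - t) * norm w + t * norm w'"
      "\<forall>h. cmod (cinner h u) \<le> (1 - t) * cmod (cinner h w) + t * cmod (cinner h w')"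
      using improving_combination[OF t(1,2) better] by blast
    have "cmod (cinner h u) \<le> sqrt Pt" if "h \<in> unc_ball h0 eps sg" for h
    proof -
      have "(1 - t) * cmod (cinner h w) + t * cmod (cinner h w') \<le> (1 - t) * sqrt Pt + t * sqrt Pt"
        using t interf_w interf_w' that by (intro add_mono mult_left_mono) auto
      then show ?thesis
        using u(3)[rule_format, of h] by (simp add: algebra_simps)
    qed
    then have "cmod (cinner hs u) \<le> cmod (cinner hs w)"
      using gain_le_of_is_opt_P3[OF opt[unfolded S]] u(2) t(3) by simp
    then show False
      using u(1) by simp
  qed
  then show ?thesis
    using opt by (auto simp: is_opt_def feas_P3_def feas_SP2_def S beam_iff_outer_1)
qed

lemma is_opt_SP1_if_interference_slack:
  assumes opt: "is_opt (feas_P3 h0 eps sg Pbar Pt) (rate hs) S"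
    and hopt: "hopt \<in> unc_ball h0 eps sg" "\<forall>h\<in>unc_ball h0 eps sg. hform S h \<le> hform S hopt"
    and slack: "hform S hopt < Pt"
  shows "is_opt (feas_SP1 Pbar) (rate hs) S"
proof -
  obtain w where S: "S = outer 1 w"
    using opt by (auto simp: is_opt_def feas_P3_def beam_iff_outer_1)
  have power_w: "norm w \<le> sqrt Pbar"
    using opt by (simp add: S is_opt_def feas_P3_outer_1)
  define m where "m = cmod (cinner hopt w)"
  have interf_w: "cmod (cinner h w) \<le> m" if "h \<in> unc_ball h0 eps sg" for h
    using hopt(2) that by (simp add: S m_def hform_outer power_mono_iff)
  have m_less: "m < sqrt Pt"
    using slack by (simp add: S m_def hform_outer real_less_rsqrt)
  have "rate hs (outer 1 w') \<le> rate hs S" if "feas_SP1 Pbar (outer 1 w')" for w'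
  proof (rule ccontr)
    assume "\<not> ?thesis"
    then have better: "cmod (cinner hs w) < cmod (cinner hs w')"
      by (simp add: S not_le rate_outer_1_less_iff)
    have power_w': "norm w' \<le> sqrt Pbar"
      using that by (simp add: feas_SP1_def power_con_outer_1)
    obtain K where K: "\<forall>h\<in>unc_ball h0 eps sg. cmod (cinner h w') \<le> K"
      using cinner_bounded_on_unc_ball by blast
    obtain t where t: "0 < t" "t \<le> 1" "(1 - t) * m + t * K \<le> sqrt Pt"
      using exists_small_step[OF m_less] by blast
    obtain u where u: "cmod (cinner hs w) < cmod (cinner hs u)" "norm u \<le> (1 - t) * norm w + t * norm w'"
      "\<forall>h. cmod (cinner h u) \<le> (1 - t) * cmod (cinner h w) + t * cmod (cinner h w')"
      using improving_combination[OF t(1,2) better] by blast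
    have "(1 - t) * norm w + t * norm w' \<le> (1 - t) * sqrt Pbar + t * sqrt Pbar"
      using t power_w power_w' by (intro add_mono mult_left_mono) auto
    then have "norm u \<le> sqrt Pbar"
      using u(2) by (simp add: algebra_simps)
    moreover have "cmod (cinner h u) \<le> sqrt Pt" if "h \<in> unc_ball h0 eps sg" for h
    proof -
      have "(1 - t) * cmod (cinner h w) + t * cmod (cinner h w') \<le> (1 - t) * m + t * K"
        using t interf_w K that by (intro add_mono mult_left_mono) auto
      then show ?thesis
        using u(3)[rule_format, of h] t(3) by linarith
    qed
    ultimately have "cmod (cinner hs u) \<le> cmod (cinner hs w)"
      using gain_le_of_is_opt_P3[OF opt[unfolded S]] by simp
    then show False
      using u(1) by simp
  qed
  then show ?thesis
    using opt by (auto simp: is_opt_def feas_P3_def feas_SP1_def S beam_iff_outer_1)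
qed

theorem lemma5:
  fixes hs h0 :: "complex ^ 'n" and sg eps Pbar Pt :: real
  assumes "sg > 0" "eps > 0" "Pbar > 0" "Pt > 0"
  shows
   "(\<forall>S1. is_opt (feas_SP1 Pbar) (rate hs) S1 \<and> interf_con h0 eps sg Pt S1
        \<longrightarrow> is_opt (feas_P3 h0 eps sg Pbar Pt) (rate hs) S1)
  \<and> (\<forall>S2. is_opt (feas_SP2 h0 eps sg Pt) (rate hs) S2 \<and> mtrace S2 \<le> Pbar
        \<longrightarrow> is_opt (feas_P3 h0 eps sg Pbar Pt) (rate hs) S2)
  \<and> ((\<forall>S1. is_opt (feas_SP1 Pbar) (rate hs) S1 \<longrightarrow> \<not> interf_con h0 eps sg Pt S1)
     \<and> (\<forall>S2. is_opt (feas_SP2 h0 eps sg Pt) (rate hs) S2 \<longrightarrow> \<not> mtrace S2 \<le> Pbar)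
     \<longrightarrow> (\<forall>S. is_opt (feas_P3 h0 eps sg Pbar Pt) (rate hs) S \<longrightarrow>
            mtrace S = Pbar \<and>
            (\<forall>hopt. hopt \<in> unc_ball h0 eps sg \<and>
                   (\<forall>h\<in>unc_ball h0 eps sg. hform S h \<le> hform S hopt)
                   \<longrightarrow> hform S hopt = Pt)))"
proof (intro conjI allI impI)
  fix S1 assume "is_opt (feas_SP1 Pbar) (rate hs) S1 \<and> interf_con h0 eps sg Pt S1"
  then show "is_opt (feas_P3 h0 eps sg Pbar Pt) (rate hs) S1"
    by (auto simp: is_opt_def feas_SP1_def feas_P3_def)
next
  fix S2 assume "is_opt (feas_SP2 h0 eps sg Pt) (rate hs) S2 \<and> mtrace S2 \<le> Pbar"
  then show "is_opt (feas_P3 h0 eps sg Pbar Pt) (rate hs) S2"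
    by (auto simp: is_opt_def feas_SP2_def feas_P3_def power_con_def)
next
  fix S
  assume neither: "(\<forall>S1. is_opt (feas_SP1 Pbar) (rate hs) S1 \<longrightarrow> \<not> interf_con h0 eps sg Pt S1)
     \<and> (\<forall>S2. is_opt (feas_SP2 h0 eps sg Pt) (rate hs) S2 \<longrightarrow> \<not> mtrace S2 \<le> Pbar)"
    and opt: "is_opt (feas_P3 h0 eps sg Pbar Pt) (rate hs) S"
  then have power: "mtrace S \<le> Pbar" and interf: "interf_con h0 eps sg Pt S"
    by (auto simp: is_opt_def feas_P3_def power_con_def)
  show "mtrace S = Pbar"
    using is_opt_SP2_if_power_slack[OF opt] neither power by fastforce
  fix hopt
  assume "hopt \<in> unc_ball h0 eps sg \<and> (\<forall>h\<in>unc_ball h0 eps sg. hform S h \<le> hform S hopt)"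
  then show "hform S hopt = Pt"
    using is_opt_SP1_if_interference_slack[OF opt] neither interf
    by (fastforce simp: interf_con_def)
qed

end
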